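(* Let $\Phi:\mathbb{R}\to\mathbb{R}$ be twice continuously differentiable on $[-1,1]$ with $\Phi'(-1)=-1$, $\Phi'(1)=1$, $\Phi''(-1)<1$ and $\Phi''(1)<1$. Then $\Phi''$ has a local maximiser in $(-1,1)$ (i.e. $\Phi'$ has at least one convex-concave turning point in $(-1,1)$). Moreover, if $\Phi'$ has no further turning point in $(-1,1)$, i.e. there is $w_*\in(-1,1)$ such that $\Phi''$ is nondecreasing on $[-1,w_*]$ and nonincreasing on $[w_*,1]$, and if $\Phi(-1)=\Phi(1)$, then $g_\Phi(w)>0$ for all $w\in(-1,1)$.
   Context: $g_\Phi(w):=\int_{-1}^{w}\big(v-\Phi'(v)\big)\,dv=\Phi(-1)-\Phi(w)+\tfrac12w^2-\tfrac12$. *)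

theory Defs
  imports Complex_Main
begin

definition g_Phi :: "(real \<Rightarrow> real) \<Rightarrow> real \<Rightarrow> real" where
  "g_Phi \<Phi> w = \<Phi> (-1) - \<Phi> w + w\<^sup>2 / 2 - 1 / 2"

end

theory Submission
  imports Defs "HOL-Analysis.Analysis"
begin

text \<open>
  The global maximum of \<open>\<Phi>''\<close> on \<open>[-1,1]\<close> is at least \<open>1\<close>, since \<open>\<Phi>'\<close> rises by \<open>2\<close> over an
  interval of length \<open>2\<close>; as \<open>\<Phi>''(\<plusminus>1) < 1\<close>, it is attained in the interior.

  For the second claim note \<open>g' = h\<close> with \<open>h(w) = w - \<Phi>'(w)\<close> and \<open>h' = 1 - \<Phi>''\<close>, and that
  \<open>g\<close> and \<open>h\<close> vanish at \<open>\<plusminus>1\<close>. Since \<open>h' > 0\<close> near both endpoints, \<open>g > 0\<close> near them. If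
  \<open>g(w) \<le> 0\<close> inside, the mean value theorem gives points \<open>p < w < q\<close> with \<open>h(p) < 0 < h(q)\<close>,
  and then points \<open>r\<^sub>1 < r\<^sub>2 < r\<^sub>3\<close> with \<open>\<Phi>''(r\<^sub>1) > 1 > \<Phi>''(r\<^sub>2)\<close> and \<open>\<Phi>''(r\<^sub>3) > 1\<close>,
  i.e. a valley of \<open>\<Phi>''\<close>, which a function increasing up to \<open>w\<^sub>*\<close> and decreasing after
  cannot have.
\<close>

lemma mvt_within:
  fixes f f' :: "real \<Rightarrow> real"
  assumes "a < b" "{a..b} \<subseteq> S"
    and deriv: "\<And>x. x \<in> S \<Longrightarrow> (f has_real_derivative f' x) (at x within S)"
  shows "\<exists>x\<in>{a<..<b}. f b - f a = f' x * (b - a)"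
proof -
  have "(f has_derivative (*) (f' x)) (at x within {a..b})" if "a \<le> x" "x \<le> b" for x
    using deriv[of x] that assms(2) has_field_derivative_subset[of f "f' x" x S "{a..b}"]
    by (auto simp: has_field_derivative_def)
  from mvt_simple[OF \<open>a < b\<close> this] show ?thesis by auto
qed

lemma exists_deriv_pos:
  fixes f f' :: "real \<Rightarrow> real"
  assumes "a < b" "{a..b} \<subseteq> S" "f a < f b"
    and "\<And>x. x \<in> S \<Longrightarrow> (f has_real_derivative f' x) (at x within S)"
  shows "\<exists>x\<in>{a<..<b}. f' x > 0"
proof -
  obtain x where "x \<in> {a<..<b}" "f b - f a = f' x * (b - a)"
    using mvt_within[of a b S f f'] assms by blast
  with \<open>f a < f b\<close> have "f' x > 0"
    by (metis diff_gt_0_iff_gt less_trans zero_less_mult_pos2 greaterThanLessThan_iff)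
  with \<open>x \<in> {a<..<b}\<close> show ?thesis ..
qed

lemma exists_deriv_neg:
  fixes f f' :: "real \<Rightarrow> real"
  assumes "a < b" "{a..b} \<subseteq> S" "f b < f a"
    and "\<And>x. x \<in> S \<Longrightarrow> (f has_real_derivative f' x) (at x within S)"
  shows "\<exists>x\<in>{a<..<b}. f' x < 0"
proof -
  obtain x where "x \<in> {a<..<b}" "f b - f a = f' x * (b - a)"
    using mvt_within[of a b S f f'] assms by blast
  with \<open>f b < f a\<close> have "f' x < 0"
    by (metis diff_gt_0_iff_gt diff_less_0_iff_less less_trans mult_less_0_iff
        not_less_iff_gr_or_eq greaterThanLessThan_iff)
  with \<open>x \<in> {a<..<b}\<close> show ?thesis ..
qed

lemma deriv_pos_imp_less:
  fixes f f' :: "real \<Rightarrow> real"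
  assumes "a < b" "{a..b} \<subseteq> S" "\<And>x. x \<in> {a<..<b} \<Longrightarrow> f' x > 0"
    and "\<And>x. x \<in> S \<Longrightarrow> (f has_real_derivative f' x) (at x within S)"
  shows "f a < f b"
proof -
  obtain x where "x \<in> {a<..<b}" "f b - f a = f' x * (b - a)"
    using mvt_within[of a b S f f'] assms by blast
  with assms(3)[of x] show ?thesis
    by (metis diff_gt_0_iff_gt less_trans mult_pos_pos greaterThanLessThan_iff)
qed

lemma deriv_neg_imp_greater:
  fixes f f' :: "real \<Rightarrow> real"
  assumes "a < b" "{a..b} \<subseteq> S" "\<And>x. x \<in> {a<..<b} \<Longrightarrow> f' x < 0"
    and "\<And>x. x \<in> S \<Longrightarrow> (f has_real_derivative f' x) (at x within S)"
  shows "f b < f a"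
proof -
  obtain x where "x \<in> {a<..<b}" "f b - f a = f' x * (b - a)"
    using mvt_within[of a b S f f'] assms by blast
  with assms(3)[of x] show ?thesis
    by (metis diff_gt_0_iff_gt diff_less_0_iff_less less_trans mult_neg_pos greaterThanLessThan_iff)
qed

lemma continuous_on_pos_near:
  fixes k :: "real \<Rightarrow> real"
  assumes "continuous_on S k" "x \<in> S" "k x > 0"
  obtains d where "d > 0" "\<And>y. y \<in> S \<Longrightarrow> \<bar>y - x\<bar> < d \<Longrightarrow> k y > 0"
proof -
  obtain d where "d > 0" "\<forall>y\<in>S. dist y x < d \<longrightarrow> dist (k y) (k x) < k x"
    using assms unfolding continuous_on_iff by blast
  then show ?thesis using that by (force simp: dist_real_def)
qed

lemma positive_near_left_endpoint:
  fixes G h k :: "real \<Rightarrow> real"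
  assumes "a < b"
    and dG: "\<And>x. x \<in> {a..b} \<Longrightarrow> (G has_real_derivative h x) (at x within {a..b})"
    and dh: "\<And>x. x \<in> {a..b} \<Longrightarrow> (h has_real_derivative k x) (at x within {a..b})"
    and "continuous_on {a..b} k" "G a = 0" "h a = 0" "k a > 0"
  obtains c where "a < c" "c \<le> b" "\<And>x. x \<in> {a<..c} \<Longrightarrow> G x > 0"
proof -
  obtain d where d: "d > 0" "\<And>y. y \<in> {a..b} \<Longrightarrow> \<bar>y - a\<bar> < d \<Longrightarrow> k y > 0"
    using continuous_on_pos_near[of "{a..b}" k a] assms by auto
  define c where "c = min b (a + d / 2)"
  have "h \<xi> > 0" if "\<xi> \<in> {a<..c}" for \<xi>
    using deriv_pos_imp_less[of a \<xi> "{a..b}" k h] that d dh \<open>h a = 0\<close> by (force simp: c_def)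
  then have "G x > 0" if "x \<in> {a<..c}" for x
    using deriv_pos_imp_less[of a x "{a..b}" h G] that dG \<open>G a = 0\<close> by (force simp: c_def)
  moreover have "a < c" "c \<le> b" using d \<open>a < b\<close> by (auto simp: c_def)
  ultimately show ?thesis using that by blast
qed

lemma positive_near_right_endpoint:
  fixes G h k :: "real \<Rightarrow> real"
  assumes "a < b"
    and dG: "\<And>x. x \<in> {a..b} \<Longrightarrow> (G has_real_derivative h x) (at x within {a..b})"
    and dh: "\<And>x. x \<in> {a..b} \<Longrightarrow> (h has_real_derivative k x) (at x within {a..b})"
    and "continuous_on {a..b} k" "G b = 0" "h b = 0" "k b > 0"
  obtains c where "a \<le> c" "c < b" "\<And>x. x \<in> {c..<b} \<Longrightarrow> G x > 0"
proof -
  obtain d where d: "d > 0" "\<And>y. y \<in> {a..b} \<Longrightarrow> \<bar>y - b\<bar> < d \<Longrightarrow> k y > 0"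
    using continuous_on_pos_near[of "{a..b}" k b] assms by auto
  define c where "c = max a (b - d / 2)"
  have "h \<xi> < 0" if "\<xi> \<in> {c..<b}" for \<xi>
    using deriv_pos_imp_less[of \<xi> b "{a..b}" k h] that d dh \<open>h b = 0\<close> by (force simp: c_def)
  then have "G x > 0" if "x \<in> {c..<b}" for x
    using deriv_neg_imp_greater[of x b "{a..b}" h G] that dG \<open>G b = 0\<close> by (force simp: c_def)
  moreover have "a \<le> c" "c < b" using d \<open>a < b\<close> by (auto simp: c_def)
  ultimately show ?thesis using that by blast
qed

lemma unimodal_imp_quasiconcave:
  fixes f :: "real \<Rightarrow> 'b::linorder"
  assumes "mono_on {a..m} f" "antimono_on {m..b} f"
    and "a \<le> r1" "r1 < r2" "r2 < r3" "r3 \<le> b"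
  shows "min (f r1) (f r3) \<le> f r2"
proof (cases "r2 \<le> m")
  case True
  then have "f r1 \<le> f r2" using mono_onD[OF assms(1)] assms by auto
  then show ?thesis by (simp add: min_le_iff_disj)
next
  case False
  then have "f r3 \<le> f r2" using monotone_onD[OF assms(2)] assms by auto
  then show ?thesis by (simp add: min_le_iff_disj)
qed

lemma positive_if_second_derivative_quasiconvex:
  fixes G h k :: "real \<Rightarrow> real"
  assumes "a < b"
    and dG: "\<And>x. x \<in> {a..b} \<Longrightarrow> (G has_real_derivative h x) (at x within {a..b})"
    and dh: "\<And>x. x \<in> {a..b} \<Longrightarrow> (h has_real_derivative k x) (at x within {a..b})"
    and "continuous_on {a..b} k"
    and "G a = 0" "G b = 0" and h0: "h a = 0" "h b = 0" and "k a > 0" "k b > 0"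
    and quasiconvex: "\<And>r1 r2 r3. a \<le> r1 \<Longrightarrow> r1 < r2 \<Longrightarrow> r2 < r3 \<Longrightarrow> r3 \<le> b
                        \<Longrightarrow> k r2 \<le> max (k r1) (k r3)"
    and w: "w \<in> {a<..<b}"
  shows "G w > 0"
proof (rule ccontr)
  assume "\<not> G w > 0"
  then have Gw: "G w \<le> 0" by simp
  obtain c1 where c1: "a < c1" "c1 \<le> b" "\<And>x. x \<in> {a<..c1} \<Longrightarrow> G x > 0"
    using positive_near_left_endpoint[OF assms(1-4)] assms by blast
  obtain c3 where c3: "a \<le> c3" "c3 < b" "\<And>x. x \<in> {c3..<b} \<Longrightarrow> G x > 0"
    using positive_near_right_endpoint[OF assms(1-4)] assms by blast
  have "c1 < w" using c1(3)[of w] w Gw by fastforce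
  have "w < c3" using c3(3)[of w] w Gw by fastforce
  obtain p where p: "p \<in> {c1<..<w}" "h p < 0"
    using exists_deriv_neg[of c1 w "{a..b}" G h] c1 \<open>c1 < w\<close> w Gw dG by force
  obtain q where q: "q \<in> {w<..<c3}" "h q > 0"
    using exists_deriv_pos[of w c3 "{a..b}" G h] c3 \<open>w < c3\<close> w Gw dG by force
  obtain r1 where r1: "r1 \<in> {a<..<p}" "k r1 < 0"
    using exists_deriv_neg[of a p "{a..b}" h k] p c1 w h0 dh by force
  obtain r2 where r2: "r2 \<in> {p<..<q}" "k r2 > 0"
    using exists_deriv_pos[of p q "{a..b}" h k] p q c1 c3 w dh by force
  obtain r3 where r3: "r3 \<in> {q<..<b}" "k r3 < 0"
    using exists_deriv_neg[of q b "{a..b}" h k] q c3 w h0 dh by force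
  have "k r2 \<le> max (k r1) (k r3)"
    using quasiconvex[of r1 r2 r3] r1 r2 r3 by auto
  with r1 r2 r3 show False by simp
qed

lemma exists_interior_maximum:
  fixes f :: "real \<Rightarrow> real"
  assumes "continuous_on {a..b} f" "\<xi> \<in> {a..b}" "f a < f \<xi>" "f b < f \<xi>"
  shows "\<exists>x\<in>{a<..<b}. \<forall>y\<in>{a..b}. f y \<le> f x"
proof -
  obtain x where x: "x \<in> {a..b}" "\<forall>y\<in>{a..b}. f y \<le> f x"
    using continuous_attains_sup[OF compact_Icc _ assms(1)] assms(2) by auto
  then have "x \<noteq> a" "x \<noteq> b" using assms by force+
  with x show ?thesis by auto
qed

theorem mainTheorem4:
  fixes \<Phi> \<Phi>1 \<Phi>2 :: "real \<Rightarrow> real"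
  assumes d1: "\<And>x. x \<in> {-1..1} \<Longrightarrow> (\<Phi> has_real_derivative \<Phi>1 x) (at x within {-1..1})"
    and d2: "\<And>x. x \<in> {-1..1} \<Longrightarrow> (\<Phi>1 has_real_derivative \<Phi>2 x) (at x within {-1..1})"
    and c2: "continuous_on {-1..1} \<Phi>2"
    and b1: "\<Phi>1 (-1) = -1" and b2: "\<Phi>1 1 = 1"
    and b3: "\<Phi>2 (-1) < 1" and b4: "\<Phi>2 1 < 1"
  shows "(\<exists>x\<in>{-1<..<1}. \<exists>e>0. \<forall>y\<in>{-1..1}. \<bar>y - x\<bar> < e \<longrightarrow> \<Phi>2 y \<le> \<Phi>2 x)
       \<and> ((\<exists>ws\<in>{-1<..<1}. mono_on {-1..ws} \<Phi>2 \<and> antimono_on {ws..1} \<Phi>2)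
            \<and> \<Phi> (-1) = \<Phi> 1
          \<longrightarrow> (\<forall>w\<in>{-1<..<1}. g_Phi \<Phi> w > 0))"
proof (intro conjI impI ballI)
  obtain \<xi> where "\<xi> \<in> {-1<..<1}" "\<Phi>1 1 - \<Phi>1 (-1) = \<Phi>2 \<xi> * (1 - (-1))"
    using mvt_within[of "-1" 1 "{-1..1}" \<Phi>1 \<Phi>2] d2 by auto
  then have "\<xi> \<in> {-1..1}" "\<Phi>2 \<xi> = 1" using b1 b2 by auto
  then obtain x where "x \<in> {-1<..<1}" "\<forall>y\<in>{-1..1}. \<Phi>2 y \<le> \<Phi>2 x"
    using exists_interior_maximum[OF c2, of \<xi>] b3 b4 by auto
  then show "\<exists>x\<in>{-1<..<1}. \<exists>e>0. \<forall>y\<in>{-1..1}. \<bar>y - x\<bar> < e \<longrightarrow> \<Phi>2 y \<le> \<Phi>2 x"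
    by (intro bexI[of _ x] exI[of _ 1]) auto
next
  fix w :: real
  assume "(\<exists>ws\<in>{-1<..<1}. mono_on {-1..ws} \<Phi>2 \<and> antimono_on {ws..1} \<Phi>2) \<and> \<Phi> (-1) = \<Phi> 1"
    and w: "w \<in> {-1<..<1}"
  then obtain ws where ws: "mono_on {-1..ws} \<Phi>2" "antimono_on {ws..1} \<Phi>2"
    and "\<Phi> (-1) = \<Phi> 1" by auto
  then have G0: "g_Phi \<Phi> (-1) = 0" "g_Phi \<Phi> 1 = 0" by (simp_all add: g_Phi_def)
  have dG: "(g_Phi \<Phi> has_real_derivative x - \<Phi>1 x) (at x within {-1..1})" if "x \<in> {-1..1}" for x
    unfolding g_Phi_def using that by (auto intro!: derivative_eq_intros d1)
  have dh: "((\<lambda>x. x - \<Phi>1 x) has_real_derivative 1 - \<Phi>2 x) (at x within {-1..1})"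
    if "x \<in> {-1..1}" for x
    using that by (auto intro!: derivative_eq_intros d2)
  have "continuous_on {-1..1} (\<lambda>x. 1 - \<Phi>2 x)" by (intro continuous_intros c2)
  moreover have "1 - \<Phi>2 r2 \<le> max (1 - \<Phi>2 r1) (1 - \<Phi>2 r3)"
    if "-1 \<le> r1" "r1 < r2" "r2 < r3" "r3 \<le> 1" for r1 r2 r3
    using unimodal_imp_quasiconcave[OF ws that] by linarith
  ultimately show "g_Phi \<Phi> w > 0"
    using positive_if_second_derivative_quasiconvex[OF _ dG dh] G0 b1 b2 b3 b4 w by simp
qed

end
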